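(* Let $m\in\mathbb{N}$ and let $\{\{a_1,\dots,a_m\},\{b_1,\dots,b_m\}\}$ be an $m+m$ sum-and-distance system (non-inclusive or inclusive). Then \[\sum_{j=1}^m(a_j^2+b_j^2)=\begin{cases}\frac{1}{3!}(2m)\big((2m)^4-1\big) & \text{in the non-inclusive case},\\[2pt] \frac{1}{4!}(2m+1)\big((2m+1)^4-1\big) & \text{in the inclusive case}.\end{cases}\]
   Context: For positive integers $a_1<\dots<a_m$, $b_1<\dots<b_m$, the pair $\{\{a_1,\dots,a_m\},\{b_1,\dots,b_m\}\}$ is an $m+m$ non-inclusive sum-and-distance system if $\{a_j+b_k,\ |a_j-b_k| : j,k\in\{1,\dots,m\}\}=\{1,3,5,\dots,4m^2-1\}$, and an $m+m$ inclusive sum-and-distance system if $\{a_j,\ b_k,\ a_j+b_k,\ |a_j-b_k| : j,k\in\{1,\dots,m\}\}=\{1,2,\dots,2m(m+1)\}$. *)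

theory Defs
  imports Complex_Main
begin

definition mm_pair :: "nat \<Rightarrow> int set \<Rightarrow> int set \<Rightarrow> bool" where
  "mm_pair m A B \<longleftrightarrow> finite A \<and> finite B \<and> card A = m \<and> card B = m
     \<and> (\<forall>a\<in>A. a > 0) \<and> (\<forall>b\<in>B. b > 0)"

definition noninclusive_sds :: "nat \<Rightarrow> int set \<Rightarrow> int set \<Rightarrow> bool" where
  "noninclusive_sds m A B \<longleftrightarrow> mm_pair m A B \<and>
     {a + b | a b. a \<in> A \<and> b \<in> B} \<union> {\<bar>a - b\<bar> | a b. a \<in> A \<and> b \<in> B}
       = {k. odd k \<and> 1 \<le> k \<and> k \<le> 4 * int m ^ 2 - 1}"

definition inclusive_sds :: "nat \<Rightarrow> int set \<Rightarrow> int set \<Rightarrow> bool" where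
  "inclusive_sds m A B \<longleftrightarrow> mm_pair m A B \<and>
     A \<union> B \<union> {a + b | a b. a \<in> A \<and> b \<in> B} \<union> {\<bar>a - b\<bar> | a b. a \<in> A \<and> b \<in> B}
       = {1 .. 2 * int m * (int m + 1)}"

end

theory Submission
  imports Defs
begin

text \<open>The target set has exactly as many elements as there are sums $a_j+b_k$ and
  distances $|a_j-b_k|$ (together with the $a_j$ and $b_k$ in the inclusive case), so all
  of these are pairwise distinct. Summing squares over the target set and using
  $(a+b)^2+(a-b)^2 = 2a^2+2b^2$ therefore gives $2m\sum_j(a_j^2+b_j^2)$
  (resp.\ $(2m+1)\sum_j(a_j^2+b_j^2)$), which is compared with the closed form for the sum
  of the squares of the odd numbers (resp.\ of all numbers) in the target set.\<close>

lemma card_Un_tight: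
  assumes "finite X" "finite Y" "card X \<le> p" "card Y \<le> q" "p + q \<le> card (X \<union> Y)"
  shows "card X = p" "card Y = q" "X \<inter> Y = {}"
proof -
  have "card (X \<union> Y) + card (X \<inter> Y) = card X + card Y"
    using card_Un_Int[OF assms(1,2)] by simp
  with assms(3-5) have "card (X \<inter> Y) = 0" "card X = p" "card Y = q" by linarith+
  then show "card X = p" "card Y = q" "X \<inter> Y = {}" using assms(1) by auto
qed

lemma sum_squares_Icc_int:
  "6 * (\<Sum>k\<in>{1..int n}. k ^ 2) = int n * (int n + 1) * (2 * int n + 1)"
proof (induction n)
  case (Suc n)
  have "{1..int (Suc n)} = insert (int n + 1) {1..int n}" by auto
  with Suc show ?case by (simp add: algebra_simps power2_eq_square)
qed simp

lemma odd_ints_atMost_eq_image: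
  "{k::int. odd k \<and> 1 \<le> k \<and> k \<le> 2 * n - 1} = (\<lambda>i. 2 * i - 1) ` {1..n}"
proof (intro set_eqI iffI)
  fix k assume k: "k \<in> {k::int. odd k \<and> 1 \<le> k \<and> k \<le> 2 * n - 1}"
  then obtain j where "k = 2 * j + 1" by (auto elim: oddE)
  with k show "k \<in> (\<lambda>i. 2 * i - 1) ` {1..n}"
    by (intro image_eqI[where x = "j + 1"]) auto
qed auto

lemma sum_odd_squares_int:
  "3 * (\<Sum>k\<in>{k::int. odd k \<and> 1 \<le> k \<and> k \<le> 2 * int n - 1}. k ^ 2)
     = int n * (2 * int n - 1) * (2 * int n + 1)"
proof -
  have inj: "inj_on (\<lambda>i::int. 2 * i - 1) {1..int n}" by (auto simp: inj_on_def)
  have "3 * (\<Sum>i\<in>{1..int n}. (2 * i - 1) ^ 2) = int n * (2 * int n - 1) * (2 * int n + 1)"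
  proof (induction n)
    case (Suc n)
    have "{1..int (Suc n)} = insert (int n + 1) {1..int n}" by auto
    with Suc show ?case by (simp add: algebra_simps power2_eq_square)
  qed simp
  then show ?thesis
    unfolding odd_ints_atMost_eq_image sum.reindex[OF inj] by (simp add: o_def)
qed

lemma card_odd_ints_int:
  "card {k::int. odd k \<and> 1 \<le> k \<and> k \<le> 2 * int n - 1} = n"
proof -
  have "inj_on (\<lambda>i::int. 2 * i - 1) {1..int n}" by (auto simp: inj_on_def)
  then show ?thesis unfolding odd_ints_atMost_eq_image by (simp add: card_image)
qed

lemma pair_sums_eq_image: "{a + b | a b. a \<in> A \<and> b \<in> B} = (\<lambda>(a, b). a + b) ` (A \<times> B)"
  by auto

lemma pair_dists_eq_image: "{\<bar>a - b\<bar> | a b. a \<in> A \<and> b \<in> B} = (\<lambda>(a, b). \<bar>a - b\<bar>) ` (A \<times> B)"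
  by auto

lemma
  fixes A B :: "'a::linordered_idom set"
  assumes "finite A" "finite B"
  shows finite_pair_sums: "finite {a + b | a b. a \<in> A \<and> b \<in> B}"
    and finite_pair_dists: "finite {\<bar>a - b\<bar> | a b. a \<in> A \<and> b \<in> B}"
    and card_pair_sums_le: "card {a + b | a b. a \<in> A \<and> b \<in> B} \<le> card A * card B"
    and card_pair_dists_le: "card {\<bar>a - b\<bar> | a b. a \<in> A \<and> b \<in> B} \<le> card A * card B"
  unfolding pair_sums_eq_image pair_dists_eq_image
  using assms card_image_le[of "A \<times> B"] by (auto simp: card_cartesian_product)

lemma sum_squares_pair_sums_dists:
  fixes A B :: "'a::linordered_idom set"
  assumes "finite A" "finite B"
    and "card {a + b | a b. a \<in> A \<and> b \<in> B} = card A * card B"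
    and "card {\<bar>a - b\<bar> | a b. a \<in> A \<and> b \<in> B} = card A * card B"
  shows "(\<Sum>k\<in>{a + b | a b. a \<in> A \<and> b \<in> B}. k ^ 2)
           + (\<Sum>k\<in>{\<bar>a - b\<bar> | a b. a \<in> A \<and> b \<in> B}. k ^ 2)
         = 2 * (of_nat (card B) * (\<Sum>a\<in>A. a ^ 2) + of_nat (card A) * (\<Sum>b\<in>B. b ^ 2))"
proof -
  have fin: "finite (A \<times> B)" using assms by simp
  have inj_sum: "inj_on (\<lambda>(a, b). a + b) (A \<times> B)"
    using assms(3) by (intro eq_card_imp_inj_on[OF fin])
      (simp add: pair_sums_eq_image card_cartesian_product)
  have inj_dist: "inj_on (\<lambda>(a, b). \<bar>a - b\<bar>) (A \<times> B)"
    using assms(4) by (intro eq_card_imp_inj_on[OF fin])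
      (simp add: pair_dists_eq_image card_cartesian_product)
  have "(\<Sum>k\<in>{a + b | a b. a \<in> A \<and> b \<in> B}. k ^ 2)
          + (\<Sum>k\<in>{\<bar>a - b\<bar> | a b. a \<in> A \<and> b \<in> B}. k ^ 2)
        = (\<Sum>(a, b)\<in>A \<times> B. (a + b) ^ 2 + \<bar>a - b\<bar> ^ 2)"
    unfolding pair_sums_eq_image pair_dists_eq_image
      sum.reindex[OF inj_sum] sum.reindex[OF inj_dist]
    by (simp add: o_def case_prod_beta' sum.distrib)
  also have "\<dots> = (\<Sum>a\<in>A. \<Sum>b\<in>B. 2 * a ^ 2 + 2 * b ^ 2)"
    by (simp add: sum.cartesian_product power2_eq_square algebra_simps)
  also have "\<dots> = 2 * (of_nat (card B) * (\<Sum>a\<in>A. a ^ 2) + of_nat (card A) * (\<Sum>b\<in>B. b ^ 2))"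
    by (simp add: sum.distrib sum_distrib_left sum.swap[of "\<lambda>a b. b ^ 2" A B] algebra_simps)
  finally show ?thesis .
qed

lemma noninclusive_sds_sum_squares:
  assumes "noninclusive_sds m A B"
  shows "3 * ((\<Sum>a\<in>A. a ^ 2) + (\<Sum>b\<in>B. b ^ 2)) = int m * (16 * int m ^ 4 - 1)"
proof -
  define P where "P = {a + b | a b. a \<in> A \<and> b \<in> B}"
  define Q where "Q = {\<bar>a - b\<bar> | a b. a \<in> A \<and> b \<in> B}"
  define T where "T = (\<Sum>a\<in>A. a ^ 2) + (\<Sum>b\<in>B. b ^ 2)"
  have mm: "mm_pair m A B" and target: "P \<union> Q = {k. odd k \<and> 1 \<le> k \<and> k \<le> 4 * int m ^ 2 - 1}"
    using assms unfolding noninclusive_sds_def P_def Q_def by simp_all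
  then have fin: "finite A" "finite B" and card: "card A = m" "card B = m"
    unfolding mm_pair_def by simp_all
  have "4 * int m ^ 2 = 2 * int (2 * m ^ 2)" by simp
  note target = target[unfolded this]
  have fin_PQ: "finite P" "finite Q"
    unfolding P_def Q_def using finite_pair_sums finite_pair_dists fin by auto
  have card_P: "card P \<le> m * m" and card_Q: "card Q \<le> m * m"
    unfolding P_def Q_def using card_pair_sums_le[OF fin] card_pair_dists_le[OF fin] card
    by simp_all
  have "m * m + m * m \<le> card (P \<union> Q)"
    unfolding target card_odd_ints_int by (simp add: power2_eq_square)
  from card_Un_tight[OF fin_PQ card_P card_Q this]
  have tight: "card P = m * m" "card Q = m * m" "P \<inter> Q = {}" .
  have "(\<Sum>k\<in>P \<union> Q. k ^ 2) = 2 * (int m * T)"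
    using sum_squares_pair_sums_dists[OF fin] tight card fin_PQ
    unfolding P_def Q_def T_def by (simp add: sum.union_disjoint algebra_simps)
  moreover have "3 * (\<Sum>k\<in>P \<union> Q. k ^ 2)
      = int (2 * m ^ 2) * (2 * int (2 * m ^ 2) - 1) * (2 * int (2 * m ^ 2) + 1)"
    unfolding target by (rule sum_odd_squares_int)
  ultimately have "int m * (3 * T) = int m * (int m * (16 * int m ^ 4 - 1))"
    by (simp add: algebra_simps power2_eq_square power4_eq_xxxx)
  moreover have "A = {}" "B = {}" if "m = 0" using fin card that by auto
  ultimately show ?thesis unfolding T_def by (cases "m = 0") auto
qed

lemma inclusive_sds_sum_squares:
  assumes "inclusive_sds m A B"
  shows "3 * ((\<Sum>a\<in>A. a ^ 2) + (\<Sum>b\<in>B. b ^ 2))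
           = int m * (int m + 1) * (2 * int m ^ 2 + 2 * int m + 1) * (2 * int m + 1)"
proof -
  define P where "P = {a + b | a b. a \<in> A \<and> b \<in> B}"
  define Q where "Q = {\<bar>a - b\<bar> | a b. a \<in> A \<and> b \<in> B}"
  define T where "T = (\<Sum>a\<in>A. a ^ 2) + (\<Sum>b\<in>B. b ^ 2)"
  define N where "N = 2 * m * (m + 1)"
  have mm: "mm_pair m A B" and target: "A \<union> B \<union> P \<union> Q = {1 .. 2 * int m * (int m + 1)}"
    using assms unfolding inclusive_sds_def P_def Q_def by simp_all
  then have fin: "finite A" "finite B" and card: "card A = m" "card B = m"
    unfolding mm_pair_def by simp_all
  have "2 * int m * (int m + 1) = int N" by (simp add: N_def algebra_simps)
  note target = target[unfolded this]
  have fin_PQ: "finite P" "finite Q"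
    unfolding P_def Q_def using finite_pair_sums[OF fin] finite_pair_dists[OF fin] .
  have card_P: "card P \<le> m * m" and card_Q: "card Q \<le> m * m"
    unfolding P_def Q_def using card_pair_sums_le[OF fin] card_pair_dists_le[OF fin] card
    by simp_all
  have card_AB: "card (A \<union> B) \<le> m + m"
    using card_Un_le[of A B] card by simp
  have card_ABP: "card (A \<union> B \<union> P) \<le> (m + m) + m * m"
    using card_Un_le[of "A \<union> B" P] card_AB card_P by simp
  have fin_AB: "finite (A \<union> B)" and fin_ABP: "finite (A \<union> B \<union> P)"
    using fin fin_PQ by simp_all
  have "card (A \<union> B \<union> P \<union> Q) = N"
    unfolding target by simp
  then have "((m + m) + m * m) + m * m \<le> card (A \<union> B \<union> P \<union> Q)"
    by (simp add: N_def algebra_simps)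
  from card_Un_tight[OF fin_ABP fin_PQ(2) card_ABP card_Q this]
  have tight3: "card (A \<union> B \<union> P) = (m + m) + m * m" "card Q = m * m"
    "(A \<union> B \<union> P) \<inter> Q = {}" .
  from card_Un_tight[OF fin_AB fin_PQ(1) card_AB card_P] tight3(1)
  have tight2: "card (A \<union> B) = m + m" "card P = m * m" "(A \<union> B) \<inter> P = {}"
    by simp_all
  from card_Un_tight[OF fin, of m m] tight2(1) card
  have tight1: "A \<inter> B = {}" by simp
  have "(\<Sum>k\<in>A \<union> B \<union> P \<union> Q. k ^ 2) = T + ((\<Sum>k\<in>P. k ^ 2) + (\<Sum>k\<in>Q. k ^ 2))"
    using tight1 tight2(3) tight3(3) fin fin_AB fin_ABP fin_PQ
    unfolding T_def by (simp add: sum.union_disjoint)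
  also have "\<dots> = (2 * int m + 1) * T"
    using sum_squares_pair_sums_dists[OF fin] tight2(2) tight3(2) card
    unfolding P_def Q_def T_def by (simp add: algebra_simps)
  finally have "6 * ((2 * int m + 1) * T) = int N * (int N + 1) * (2 * int N + 1)"
    using sum_squares_Icc_int[of N] unfolding target by simp
  then have "(2 * int m + 1) * (3 * T) = (2 * int m + 1) *
      (int m * (int m + 1) * (2 * int m ^ 2 + 2 * int m + 1) * (2 * int m + 1))"
    unfolding N_def by (simp add: algebra_simps power2_eq_square)
  then show ?thesis unfolding T_def by simp
qed

theorem theorem6:
  fixes m :: nat and A B :: "int set"
  shows "(noninclusive_sds m A B \<longrightarrow>
            (of_int :: int \<Rightarrow> rat) ((\<Sum>a\<in>A. a ^ 2) + (\<Sum>b\<in>B. b ^ 2))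
              = (1 / 6) * (2 * of_nat m) * ((2 * of_nat m) ^ 4 - 1))
       \<and> (inclusive_sds m A B \<longrightarrow>
            (of_int :: int \<Rightarrow> rat) ((\<Sum>a\<in>A. a ^ 2) + (\<Sum>b\<in>B. b ^ 2))
              = (1 / 24) * (2 * of_nat m + 1) * ((2 * of_nat m + 1) ^ 4 - 1))"
proof (intro conjI impI)
  assume "noninclusive_sds m A B"
  from arg_cong[OF noninclusive_sds_sum_squares[OF this], of "of_int :: int \<Rightarrow> rat"]
  show "(of_int :: int \<Rightarrow> rat) ((\<Sum>a\<in>A. a ^ 2) + (\<Sum>b\<in>B. b ^ 2))
          = (1 / 6) * (2 * of_nat m) * ((2 * of_nat m) ^ 4 - 1)"
    by (simp add: field_simps)
next
  assume "inclusive_sds m A B"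
  from arg_cong[OF inclusive_sds_sum_squares[OF this], of "of_int :: int \<Rightarrow> rat"]
  show "(of_int :: int \<Rightarrow> rat) ((\<Sum>a\<in>A. a ^ 2) + (\<Sum>b\<in>B. b ^ 2))
          = (1 / 24) * (2 * of_nat m + 1) * ((2 * of_nat m + 1) ^ 4 - 1)"
    by (simp add: field_simps power2_eq_square power4_eq_xxxx)
qed

end
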